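(* Let $d\ge 1$ and $\lambda>0$, and let $X_1,X_2,\ldots$ be i.i.d. random vectors in $\mathbb{R}^d$ whose $d$ coordinates are i.i.d. exponential random variables with parameter $\lambda$. Let $\{y_n\}$ be any sequence of positive edge distances and let $S=\sum_n n y_n^d$. For each $n$ let $G_n(y_n)$ be the graph on vertex set $\{X_1,\ldots,X_n\}$ in which $X_i$ and $X_j$ ($i\neq j$) are joined by an edge if and only if $\|X_i-X_j\|\le y_n$, and let $\Delta_n(y_n)$ be its maximum vertex degree. Then: 1. If $S<\infty$ and $y_n$ is non-increasing, then $P[\Delta_n(y_n)\ge 1 \text{ i.o.}]=0$. 2. If $S=\infty$, then $P[\Delta_n(y_n)\ge 1\text{ i.o.}]=1$.
   Context: The norm $\|\cdot\|$ is the $\ell_\infty$ norm on $\mathbb{R}^d$. The degree of $X_i$ in $G_n(y_n)$ is $\sum_{1\le j\ne i\le n}1_{\{\|X_i-X_j\|\le y_n\}}$, and $\Delta_n(y_n)$ is the maximum of these degrees over $1\le i\le n$; "i.o." means for infinitely many $n$. *)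

theory Defs
  imports "HOL-Probability.Probability"
begin

definition linf_dist :: "real ^ 'd \<Rightarrow> real ^ 'd \<Rightarrow> real" where
  "linf_dist x y = Max (range (\<lambda>k. \<bar>x $ k - y $ k\<bar>))"

definition rgg_degree :: "(nat \<Rightarrow> real ^ 'd) \<Rightarrow> nat \<Rightarrow> real \<Rightarrow> nat \<Rightarrow> nat" where
  "rgg_degree x n r i = card {j \<in> {1..n}. j \<noteq> i \<and> linf_dist (x i) (x j) \<le> r}"

definition rgg_max_degree :: "(nat \<Rightarrow> real ^ 'd) \<Rightarrow> nat \<Rightarrow> real \<Rightarrow> nat" where
  "rgg_max_degree x n r = Max (insert 0 ((\<lambda>i. rgg_degree x n r i) ` {1..n}))"

end

(*
  Everything rests on two estimates for points of the sample. Cutting the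
  range of each coordinate of X_i into cells of width r and summing over the
  cells shows that the points X_j, j in J, all lie within l-infinity distance r
  of X_i with probability at most (3 l r)^(d |J|), and that two points share a
  cell, hence are adjacent, with probability at least (l r / 8)^d if l r <= 1.

  Convergent case: as y is non-increasing, an edge of G_n(y_n) with
  2^k <= n < 2^(k+1) is an edge among X_1, ..., X_(2^(k+1)) at distance
  y(2^k). This has probability O(4^k y(2^k)^d), which is summable, and the
  first Borel-Cantelli lemma applies.

  Divergent case: let m_k maximise y on [2^(k+2), 2^(k+3)) and let E_k be the
  event that some point with index in (2^(k+1), 2^(k+1) + 2^k] is within y(m_k)
  of some point with index in (2^(k+1) + 2^k, 2^(k+2)]. Bonferroni's
  inequality and the two estimates give P(E_k) >= c min(4^k (l y(m_k))^d, c'),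
  which is not summable because the sum of n y_n^d over [2^(k+2), 2^(k+3)) is
  at most 32 * 4^k y(m_k)^d. The E_k depend on disjoint sets of coordinates,
  so by the second Borel-Cantelli lemma infinitely many of them occur, and each
  one is an edge of G_(m_k)(y(m_k)).
*)

theory Submission
  imports Defs
begin

lemma linf_dist_le_iff: "linf_dist x y \<le> r \<longleftrightarrow> (\<forall>k. \<bar>x $ k - y $ k\<bar> \<le> r)"
  unfolding linf_dist_def by (subst Max_le_iff) auto

lemma linf_dist_commute: "linf_dist x y = linf_dist y x"
  unfolding linf_dist_def by (simp add: abs_minus_commute)

lemma rgg_max_degree_ge_1_iff:
  "rgg_max_degree x n r \<ge> 1 \<longleftrightarrow> (\<exists>i\<in>{1..n}. \<exists>j\<in>{1..n}. j \<noteq> i \<and> linf_dist (x i) (x j) \<le> r)"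
proof -
  have "rgg_max_degree x n r \<ge> 1 \<longleftrightarrow> (\<exists>i\<in>{1..n}. rgg_degree x n r i \<ge> 1)"
    unfolding rgg_max_degree_def by (subst Max_ge_iff) auto
  also have "\<dots> \<longleftrightarrow> (\<exists>i\<in>{1..n}. \<exists>j\<in>{1..n}. j \<noteq> i \<and> linf_dist (x i) (x j) \<le> r)"
    unfolding rgg_degree_def by (intro bex_cong refl) (auto simp: Suc_le_eq card_gt_0_iff)
  finally show ?thesis .
qed

lemma rgg_max_degree_ge_1_mono:
  assumes "rgg_max_degree x n r \<ge> 1" "n \<le> n'" "r \<le> r'"
  shows "rgg_max_degree x n' r' \<ge> 1"
  using assms unfolding rgg_max_degree_ge_1_iff by force

section \<open>Dyadic blocks\<close>

lemma summable_dyadic_blocks_iff: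
  fixes a :: "nat \<Rightarrow> real"
  assumes nonneg: "\<And>n. a n \<ge> 0"
  shows "summable (\<lambda>k. \<Sum>n\<in>{2^k..<2^Suc k}. a n) \<longleftrightarrow> summable a"
proof -
  have blocks: "(\<Sum>k<K. \<Sum>n\<in>{2^k..<2^Suc k}. a n) = (\<Sum>n\<in>{1..<2^K}. a n)" for K
    by (induction K) (simp_all add: sum.atLeastLessThan_concat)
  show ?thesis
  proof
    assume summable: "summable (\<lambda>k. \<Sum>n\<in>{2^k..<2^Suc k}. a n)"
    show "summable a"
    proof (rule summableI_nonneg_bounded)
      fix N
      have "(\<Sum>n<N. a n) \<le> (\<Sum>n<2^N. a n)"
        using nonneg less_exp[of N] by (intro sum_mono2) auto
      also have "\<dots> = a 0 + (\<Sum>n\<in>{1..<2^N}. a n)"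
        by (simp add: atLeast1_lessThan_eq_remove0 sum.remove)
      also have "\<dots> = a 0 + (\<Sum>k<N. \<Sum>n\<in>{2^k..<2^Suc k}. a n)"
        by (simp only: blocks)
      also have "\<dots> \<le> a 0 + (\<Sum>k. \<Sum>n\<in>{2^k..<2^Suc k}. a n)"
        using summable nonneg by (intro add_left_mono sum_le_suminf) (auto intro: sum_nonneg)
      finally show "(\<Sum>n<N. a n) \<le> a 0 + (\<Sum>k. \<Sum>n\<in>{2^k..<2^Suc k}. a n)" .
    qed (rule nonneg)
  next
    assume summable: "summable a"
    show "summable (\<lambda>k. \<Sum>n\<in>{2^k..<2^Suc k}. a n)"
    proof (rule summableI_nonneg_bounded)
      fix K
      have "(\<Sum>k<K. \<Sum>n\<in>{2^k..<2^Suc k}. a n) \<le> (\<Sum>n<2^K. a n)"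
        unfolding blocks using nonneg by (intro sum_mono2) auto
      also have "\<dots> \<le> suminf a"
        using summable nonneg by (intro sum_le_suminf) auto
      finally show "(\<Sum>k<K. \<Sum>n\<in>{2^k..<2^Suc k}. a n) \<le> suminf a" .
    qed (use nonneg in \<open>auto intro: sum_nonneg\<close>)
  qed
qed

lemma summable_dyadic_of_summable_mult:
  fixes g :: "nat \<Rightarrow> real"
  assumes nonneg: "\<And>n. 0 \<le> g n" and dec: "decseq g" and summable: "summable (\<lambda>n. real n * g n)"
  shows "summable (\<lambda>k. 4 ^ k * g (2 ^ k))"
proof -
  define b where "b k = (\<Sum>n\<in>{2^k..<2^Suc k}. real n * g n)" for k
  define f where "f k = 4 ^ k * g (2 ^ k)" for k
  have "summable b"
    unfolding b_def using summable nonneg by (subst summable_dyadic_blocks_iff) auto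
  then have "summable (\<lambda>k. 4 * b k)"
    by (rule summable_mult)
  moreover have "norm (f (Suc k)) \<le> 4 * b k" for k
  proof -
    have "2 ^ k * g (2 ^ Suc k) \<le> real n * g n" if "n \<in> {2^k..<2^Suc k}" for n
    proof (rule mult_mono)
      show "2 ^ k \<le> real n"
        using that by (simp add: numeral_power_le_of_nat_cancel_iff)
      show "g (2 ^ Suc k) \<le> g n"
        using that dec by (simp add: decseq_def)
    qed (use nonneg in auto)
    then have "(\<Sum>n\<in>{2^k..<(2::nat)^Suc k}. 2 ^ k * g (2 ^ Suc k)) \<le> b k"
      unfolding b_def by (intro sum_mono) auto
    then have "2 ^ k * (2 ^ k * g (2 ^ Suc k)) \<le> b k"
      by simp
    moreover have "f (Suc k) = 4 * (2 ^ k * (2 ^ k * g (2 ^ Suc k)))"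
      unfolding f_def by (simp add: power_mult_distrib[symmetric] mult.assoc[symmetric])
    moreover have "norm (f (Suc k)) = f (Suc k)"
      using nonneg by (simp add: f_def)
    ultimately show ?thesis
      by linarith
  qed
  ultimately have "summable (\<lambda>k. f (Suc k))"
    by (rule summable_comparison_test')
  then have "summable f"
    by (simp only: summable_Suc_iff)
  then show ?thesis
    unfolding f_def .
qed

lemma summable_mult_of_summable_dyadic_max:
  fixes g :: "nat \<Rightarrow> real"
  assumes nonneg: "\<And>n. 0 \<le> g n"
    and max: "\<And>k n. n \<in> {2^(k+2)..<2^(k+3)} \<Longrightarrow> g n \<le> g (m k)"
    and summable: "summable (\<lambda>k. 4 ^ k * g (m k))"
  shows "summable (\<lambda>n. real n * g n)"
proof -
  define b where "b k = (\<Sum>n\<in>{2^k..<2^Suc k}. real n * g n)" for k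
  have "b (k + 2) \<le> 32 * (4 ^ k * g (m k))" for k
  proof -
    have "b (k + 2) = (\<Sum>n\<in>{2^(k+2)..<(2::nat)^(k+3)}. real n * g n)"
      by (simp add: b_def numeral_3_eq_3)
    also have "\<dots> \<le> (\<Sum>n\<in>{2^(k+2)..<(2::nat)^(k+3)}. 2 ^ (k + 3) * g (m k))"
    proof (intro sum_mono mult_mono)
      fix n assume n: "n \<in> {2^(k+2)..<(2::nat)^(k+3)}"
      then show "real n \<le> 2 ^ (k + 3)"
        by (simp add: less_imp_le of_nat_less_numeral_power_cancel_iff)
      show "g n \<le> g (m k)"
        using n max by simp
    qed (use nonneg in auto)
    also have "\<dots> = 32 * (4 ^ k * g (m k))"
      by (simp add: power_add power_mult_distrib[symmetric])
    finally show ?thesis .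
  qed
  moreover have "b k \<ge> 0" for k
    using nonneg by (auto simp: b_def intro: sum_nonneg)
  ultimately have "norm (b (k + 2)) \<le> 32 * (4 ^ k * g (m k))" for k
    by simp
  with summable_mult[OF summable, of 32] have "summable (\<lambda>k. b (k + 2))"
    by (rule summable_comparison_test')
  then have "summable b"
    by (simp only: summable_iff_shift)
  then show ?thesis
    unfolding b_def using nonneg by (subst (asm) summable_dyadic_blocks_iff) auto
qed

lemma dyadic_block_argmax:
  fixes y :: "nat \<Rightarrow> 'a::linorder"
  obtains m where "\<And>k. m k \<in> {2^(k+2)..<2^(k+3)}"
    and "\<And>k n. n \<in> {2^(k+2)..<2^(k+3)} \<Longrightarrow> y n \<le> y (m k)"
proof -
  have "\<exists>n\<in>{2^(k+2)..<2^(k+3)}. \<forall>n'\<in>{2^(k+2)..<2^(k+3)}. y n' \<le> y n" for k :: nat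
  proof -
    define B where "B = {2^(k+2)..<(2::nat)^(k+3)}"
    have "B \<noteq> {}"
      by (simp add: B_def power_add)
    then have "Max (y ` B) \<in> y ` B"
      by (intro Max_in) (auto simp: B_def)
    then obtain n where "n \<in> B" "y n = Max (y ` B)"
      by (metis imageE)
    then show ?thesis
      unfolding B_def[symmetric] by (intro bexI[of _ n]) (auto simp: B_def)
  qed
  then show ?thesis
    using that by metis
qed

lemma disjoint_family_dyadic: "disjoint_family (\<lambda>k. {2^(k+1) <.. (2::nat)^(k+2)})"
  unfolding disjoint_family_on_def
proof (intro ballI impI)
  fix k k' :: nat
  have below: "(2::nat) ^ (k + 2) \<le> 2 ^ (k' + 1)" if "k < k'" for k k' :: nat
    using that by (intro power_increasing) auto
  assume "k \<noteq> k'"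
  then consider "k < k'" | "k' < k"
    by linarith
  then show "{2^(k+1) <.. (2::nat)^(k+2)} \<inter> {2^(k'+1) <.. 2^(k'+2)} = {}"
  proof cases
    case 1
    then show ?thesis
      using below[of k k'] by auto
  next
    case 2
    then show ?thesis
      using below[of k' k] by auto
  qed
qed

lemma eventually_sequentially_dyadic:
  assumes "eventually Q sequentially" and "\<And>k n. 2 ^ k \<le> n \<Longrightarrow> n < 2 ^ Suc k \<Longrightarrow> Q k \<Longrightarrow> R n"
  shows "eventually R sequentially"
proof -
  obtain K where K: "\<And>k. K \<le> k \<Longrightarrow> Q k"
    using assms(1) by (auto simp: eventually_sequentially)
  have "R n" if "2 ^ K \<le> n" for n
  proof -
    have "1 \<le> n"
      using that one_le_power[of "2::nat" K] by linarith
    then obtain k where k: "2 ^ k \<le> n" "n < 2 ^ Suc k"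
      using ex_power_ivl1[of 2 n] by auto
    then have "(2::nat) ^ K < 2 ^ Suc k"
      using that by linarith
    then have "K \<le> k"
      using power_less_imp_less_exp[of "2::nat" K "Suc k"] by simp
    then show ?thesis
      using assms(2) k K by blast
  qed
  then show ?thesis
    unfolding eventually_sequentially by blast
qed

lemma frequently_sequentially_reindex:
  assumes "\<exists>\<^sub>F k in sequentially. P (m k)" and "\<And>k. k \<le> m k"
  shows "\<exists>\<^sub>F n in sequentially. P n"
  unfolding frequently_sequentially
proof
  fix N
  obtain k where "N \<le> k" "P (m k)"
    using assms(1) by (auto simp: frequently_sequentially)
  then show "\<exists>n\<ge>N. P n"
    using assms(2)[of k] le_trans by blast
qed

lemma summable_of_summable_min:
  fixes f :: "nat \<Rightarrow> real"
  assumes "0 < c" "summable (\<lambda>k. min (f k) c)"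
  shows "summable f"
proof -
  have "eventually (\<lambda>k. min (f k) c < c) sequentially"
    using assms by (intro order_tendstoD(2)[OF summable_LIMSEQ_zero]) auto
  then have "eventually (\<lambda>k. min (f k) c = f k) sequentially"
    by eventually_elim auto
  then show ?thesis
    using assms(2) summable_cong by fastforce
qed

lemma not_summable_dyadic_min:
  fixes y :: "nat \<Rightarrow> real"
  assumes "0 < l" "0 < c" "\<And>n. 0 \<le> y n"
    and max: "\<And>k n. n \<in> {2^(k+2)..<2^(k+3)} \<Longrightarrow> y n \<le> y (m k)"
    and diverges: "\<not> summable (\<lambda>n. real n * y n ^ d)"
  shows "\<not> summable (\<lambda>k. min (4 ^ k * (l * y (m k)) ^ d) c)"
proof
  assume "summable (\<lambda>k. min (4 ^ k * (l * y (m k)) ^ d) c)"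
  then have "summable (\<lambda>k. 4 ^ k * (l * y (m k)) ^ d)"
    by (rule summable_of_summable_min[OF \<open>0 < c\<close>])
  then have "summable (\<lambda>k. (1 / l ^ d) * (4 ^ k * (l * y (m k)) ^ d))"
    by (rule summable_mult)
  then have "summable (\<lambda>k. 4 ^ k * y (m k) ^ d)"
    using assms by (simp add: power_mult_distrib)
  then have "summable (\<lambda>n. real n * y n ^ d)"
    using assms by (intro summable_mult_of_summable_dyadic_max[where m=m]) (auto intro: power_mono)
  with diverges show False ..
qed

section \<open>Bonferroni and Borel--Cantelli\<close>

lemma (in prob_space) prob_UN_ge_bonferroni:
  assumes "finite P" "\<And>a. a \<in> P \<Longrightarrow> A a \<in> events"
  shows "(\<Sum>a\<in>P. prob (A a)) - (\<Sum>a\<in>P. \<Sum>b\<in>P - {a}. prob (A a \<inter> A b)) \<le> prob (\<Union>a\<in>P. A a)"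
  using assms
proof (induction P rule: finite_induct)
  case empty
  then show ?case by simp
next
  case (insert c P)
  define U where "U = (\<Union>a\<in>P. A a)"
  have events: "A c \<in> events" "U \<in> events"
    using insert unfolding U_def by auto
  have "prob (U \<inter> A c) = prob (\<Union>b\<in>P. A c \<inter> A b)"
    unfolding U_def by (rule arg_cong[where f=prob]) auto
  also have "\<dots> \<le> (\<Sum>b\<in>P. prob (A c \<inter> A b))"
    by (intro finite_measure_subadditive_finite) (use insert in auto)
  finally have overlap: "prob (U \<inter> A c) \<le> (\<Sum>b\<in>P. prob (A c \<inter> A b))" .
  have "prob (\<Union>a\<in>insert c P. A a) = prob (A c) + prob U - prob (U \<inter> A c)"
    using finite_measure_Union'[OF events] finite_measure_Diff'[OF events(2,1)]
    by (simp add: U_def Un_commute)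
  moreover have "(\<Sum>a\<in>P. \<Sum>b\<in>P - {a}. prob (A a \<inter> A b))
      \<le> (\<Sum>a\<in>P. \<Sum>b\<in>insert c P - {a}. prob (A a \<inter> A b))"
    by (intro sum_mono sum_mono2) (use insert in auto)
  moreover have "insert c P - {c} = P"
    using insert by auto
  ultimately show ?case
    using insert overlap by (simp add: U_def)
qed

lemma (in prob_space) indep_events_compl:
  assumes "indep_events A I"
  shows "indep_events (\<lambda>i. space M - A i) I"
proof -
  have "indep_sets (\<lambda>i. sigma_sets (space M) {A i}) I"
    using assms unfolding indep_events_def_alt
    by (rule indep_sets_sigma) (auto intro: Int_stableI)
  then show ?thesis
    unfolding indep_events_def_alt
    by (rule indep_sets_mono_sets) (auto intro: sigma_sets.Compl sigma_sets.Basic)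
qed

lemma (in prob_space) prob_compl_UN_le_exp:
  assumes indep: "indep_events A UNIV" and "finite J"
  shows "prob (space M - (\<Union>n\<in>J. A n)) \<le> exp (- (\<Sum>n\<in>J. prob (A n)))"
proof (cases "J = {}")
  case False
  have "space M - (\<Union>n\<in>J. A n) = (\<Inter>n\<in>J. space M - A n)"
    using False by auto
  also have "prob \<dots> = (\<Prod>n\<in>J. 1 - prob (A n))"
    using indep_events_compl[OF indep] indep False \<open>finite J\<close>
    by (auto simp: indep_events_def prob_compl)
  also have "\<dots> \<le> (\<Prod>n\<in>J. exp (- prob (A n)))"
    by (intro prod_mono) (auto simp: exp_ge_add_one_self[of "- prob _", simplified])
  also have "\<dots> = exp (- (\<Sum>n\<in>J. prob (A n)))"
    by (simp add: exp_sum[OF \<open>finite J\<close>] sum_negf[symmetric])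
  finally show ?thesis .
qed simp

lemma (in prob_space) borel_cantelli_AE2:
  assumes indep: "indep_events A UNIV" and diverges: "\<not> summable (\<lambda>n. prob (A n))"
  shows "AE \<omega> in M. \<exists>\<^sub>F n in sequentially. \<omega> \<in> A n"
proof -
  have A_events: "A n \<in> events" for n
    using indep by (auto simp: indep_events_def)
  have tail_null: "prob (space M - (\<Union>n\<in>{N..}. A n)) = 0" for N
  proof (rule ccontr)
    let ?p = "prob (space M - (\<Union>n\<in>{N..}. A n))"
    assume "?p \<noteq> 0"
    then have pos: "0 < ?p"
      using measure_nonneg[of M] by (simp add: order_less_le)
    have "summable (\<lambda>n. prob (A (n + N)))"
    proof (rule summableI_nonneg_bounded)
      fix K
      have "?p \<le> prob (space M - (\<Union>n\<in>{N..<N + K}. A n))"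
        using A_events by (intro finite_measure_mono) auto
      also have "\<dots> \<le> exp (- (\<Sum>n\<in>{N..<N + K}. prob (A n)))"
        by (rule prob_compl_UN_le_exp[OF indep]) simp
      finally have "ln ?p \<le> - (\<Sum>n\<in>{N..<N + K}. prob (A n))"
        using pos by (metis exp_gt_zero ln_exp ln_le_cancel_iff)
      moreover have "(\<Sum>n<K. prob (A (n + N))) = (\<Sum>n\<in>{N..<N + K}. prob (A n))"
        using sum.shift_bounds_nat_ivl[of "\<lambda>n. prob (A n)" 0 N K]
        by (simp add: lessThan_atLeast0 add.commute)
      ultimately show "(\<Sum>n<K. prob (A (n + N))) \<le> - ln ?p"
        by simp
    qed simp
    then show False
      using diverges summable_iff_shift[of "\<lambda>n. prob (A n)" N] by simp
  qed
  have "AE \<omega> in M. \<omega> \<notin> space M - (\<Union>n\<in>{N..}. A n)" for N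
    using tail_null[of N] A_events by (subst prob_eq_0[symmetric]) auto
  then have "AE \<omega> in M. \<forall>N. \<omega> \<notin> space M - (\<Union>n\<in>{N..}. A n)"
    by (simp add: AE_all_countable)
  then show ?thesis
    by (rule AE_mp) (auto simp: frequently_sequentially intro!: AE_I2)
qed

section \<open>Exponential variables and grid cells\<close>

lemma sum_geometric_weights: "(\<Sum>t<K. x ^ t * (1 - x)) = 1 - (x::real) ^ K"
  unfolding one_diff_power_eq sum_distrib_left by (simp add: mult.commute)

lemma sum_sq_geometric_weights:
  fixes x :: real
  assumes "x \<noteq> -1"
  shows "(\<Sum>t<K. (x ^ t * (1 - x))\<^sup>2) = (1 - (x\<^sup>2) ^ K) * (1 - x) / (1 + x)"
proof -
  have weight_sq: "(x ^ t * (1 - x))\<^sup>2 = (x\<^sup>2) ^ t * (1 - x\<^sup>2) * ((1 - x) / (1 + x))" for t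
    using assms by (simp add: field_simps power2_eq_square power_mult_distrib power_mult[symmetric])
  have "(\<Sum>t<K. (x ^ t * (1 - x))\<^sup>2) = (\<Sum>t<K. (x\<^sup>2) ^ t * (1 - x\<^sup>2)) * ((1 - x) / (1 + x))"
    by (simp only: weight_sq sum_distrib_right)
  also have "\<dots> = (1 - (x\<^sup>2) ^ K) * ((1 - x) / (1 + x))"
    by (simp only: sum_geometric_weights)
  finally show ?thesis
    by simp
qed

lemma one_minus_exp_ge_half:
  fixes t :: real
  assumes "0 \<le> t" "t \<le> 1"
  shows "t / 2 \<le> 1 - exp (- t)"
proof -
  have "exp (- t) \<le> 1 / (1 + t)"
    using exp_ge_add_one_self[of t] assms by (simp add: exp_minus field_simps)
  also have "1 / (1 + t) \<le> 1 - t / 2"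
    using assms mult_left_le_one_le[of t t] by (simp add: field_simps)
  finally show ?thesis
    by simp
qed

context prob_space
begin

lemma exponential_prob_nonpos:
  assumes Z: "distributed M lborel Z (exponential_density l)" and l: "0 < l"
  shows "prob {\<omega>\<in>space M. Z \<omega> \<le> 0} = 0"
  using exponential_distributedD_le[OF Z _ l, of 0] by simp

lemma exponential_prob_Ioc:
  assumes Z: "distributed M lborel Z (exponential_density l)" and l: "0 < l" and "0 \<le> a" "a \<le> b"
  shows "prob {\<omega>\<in>space M. Z \<omega> \<in> {a<..b}} = exp (- a * l) - exp (- b * l)"
proof -
  have [measurable]: "Z \<in> borel_measurable M"
    using distributed_measurable[OF Z] by simp
  have "{\<omega>\<in>space M. Z \<omega> \<in> {a<..b}} = {\<omega>\<in>space M. a < Z \<omega>} - {\<omega>\<in>space M. b < Z \<omega>}"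
    using assms by auto
  also have "prob \<dots> = prob {\<omega>\<in>space M. a < Z \<omega>} - prob {\<omega>\<in>space M. b < Z \<omega>}"
    using assms by (intro finite_measure_Diff) auto
  finally show ?thesis
    using exponential_distributedD_gt[OF Z _ l] assms by simp
qed

lemma exponential_prob_Ioc_le:
  assumes Z: "distributed M lborel Z (exponential_density l)" and l: "0 < l" and "a \<le> b"
  shows "prob {\<omega>\<in>space M. Z \<omega> \<in> {a<..b}} \<le> l * (b - a)"
proof (cases "b \<le> 0")
  case True
  have "prob {\<omega>\<in>space M. Z \<omega> \<in> {a<..b}} \<le> prob {\<omega>\<in>space M. Z \<omega> \<le> 0}"
    using True distributed_measurable[OF Z] by (intro finite_measure_mono) auto
  moreover have "0 \<le> l * (b - a)"
    using assms l by simp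
  ultimately show ?thesis
    using exponential_prob_nonpos[OF Z l] by linarith
next
  case False
  have [measurable]: "Z \<in> borel_measurable M"
    using distributed_measurable[OF Z] by simp
  define a' where "a' = max a 0"
  have "prob {\<omega>\<in>space M. Z \<omega> \<in> {a<..b}}
      \<le> prob ({\<omega>\<in>space M. Z \<omega> \<le> 0} \<union> {\<omega>\<in>space M. Z \<omega> \<in> {a'<..b}})"
    by (intro finite_measure_mono) (auto simp: a'_def)
  also have "\<dots> \<le> prob {\<omega>\<in>space M. Z \<omega> \<le> 0} + prob {\<omega>\<in>space M. Z \<omega> \<in> {a'<..b}}"
    by (rule measure_Un_le) auto
  also have "\<dots> = exp (- a' * l) * (1 - exp (- ((b - a') * l)))"
    using exponential_prob_nonpos[OF Z l] exponential_prob_Ioc[OF Z l, of a' b] False assms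
    by (simp add: a'_def right_diff_distrib flip: exp_add) (simp add: algebra_simps)
  also have "\<dots> \<le> 1 * ((b - a') * l)"
    using exp_ge_add_one_self[of "- ((b - a') * l)"] False assms l
    by (intro mult_mono) (auto simp: a'_def)
  also have "\<dots> \<le> l * (b - a)"
    using assms l by (simp add: a'_def algebra_simps mult_left_mono)
  finally show ?thesis .
qed

end

definition grid_cell :: "real \<Rightarrow> nat \<Rightarrow> real set" where
  "grid_cell r t = {real t * r <.. (real t + 1) * r}"

lemma grid_cell_exists:
  assumes "0 < x" "0 < r" "x \<le> real K * r"
  shows "\<exists>t<K. x \<in> grid_cell r t"
proof -
  define t where "t = nat (\<lceil>x / r\<rceil> - 1)"
  have "0 < x / r" "x / r \<le> real K"
    using assms by (auto simp: field_simps)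
  then have "real t < x / r" "x / r \<le> real t + 1" "t < K"
    unfolding t_def by linarith+
  then show ?thesis
    using assms by (auto simp: grid_cell_def field_simps)
qed

lemma grid_cells_disjoint:
  assumes "0 < r" "t \<noteq> t'"
  shows "grid_cell r t \<inter> grid_cell r t' = {}"
proof (rule ccontr)
  assume "grid_cell r t \<inter> grid_cell r t' \<noteq> {}"
  then obtain x where x: "x \<in> grid_cell r t" "x \<in> grid_cell r t'"
    by blast
  have below: "(real s + 1) * r \<le> real s' * r" if "s < s'" for s s'
    using that assms by (intro mult_right_mono) auto
  consider "t < t'" | "t' < t"
    using assms by linarith
  then show False
    using x below[of t t'] below[of t' t] by cases (auto simp: grid_cell_def)
qed

lemma (in prob_space) exponential_prob_grid_cell:
  assumes Z: "distributed M lborel Z (exponential_density l)" and l: "0 < l" and "0 \<le> r"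
  shows "prob {\<omega>\<in>space M. Z \<omega> \<in> grid_cell r t} = exp (- r * l) ^ t * (1 - exp (- r * l))"
proof -
  have "prob {\<omega>\<in>space M. Z \<omega> \<in> grid_cell r t} = exp (- (real t * r) * l) - exp (- ((real t + 1) * r) * l)"
    unfolding grid_cell_def using assms by (intro exponential_prob_Ioc) (auto simp: distrib_right)
  also have "\<dots> = exp (- r * l) ^ t * (1 - exp (- r * l))"
  proof -
    have "exp (- (real t * r) * l) = exp (- r * l) ^ t"
      by (simp add: exp_of_nat_mult[symmetric] algebra_simps)
    moreover have "exp (- ((real t + 1) * r) * l) = exp (- r * l) ^ t * exp (- r * l)"
      by (simp add: exp_of_nat_mult[symmetric] algebra_simps flip: exp_add)
    ultimately show ?thesis
      by (simp add: algebra_simps)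
  qed
  finally show ?thesis .
qed

lemma grid_cell_borel [measurable]: "grid_cell r t \<in> sets borel"
  by (simp add: grid_cell_def)

section \<open>Points with independent exponential coordinates\<close>

locale exponential_points = prob_space M for M :: "'a measure" +
  fixes X :: "nat \<Rightarrow> 'a \<Rightarrow> real ^ 'd" and l :: real
  assumes rate_pos: "0 < l"
    and indep_coords: "indep_vars (\<lambda>_. borel) (\<lambda>(n, k) \<omega>. X n \<omega> $ k) UNIV"
    and exponential_coords: "\<And>n k. distributed M lborel (\<lambda>\<omega>. X n \<omega> $ k) (exponential_density l)"
begin

abbreviation coord :: "nat \<times> 'd \<Rightarrow> 'a \<Rightarrow> real" where
  "coord \<equiv> \<lambda>(n, k) \<omega>. X n \<omega> $ k"

lemma coord_measurable [measurable]: "(\<lambda>\<omega>. X n \<omega> $ k) \<in> borel_measurable M"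
  using distributed_measurable[OF exponential_coords[of n k]] by simp

text \<open>The generators are the sigma-algebras of the single coordinates: this is the form in
  which indep_sets_collect_sigma propagates independence to blocks of coordinates.\<close>

definition coord_sigma :: "(nat \<times> 'd) set \<Rightarrow> 'a measure" where
  "coord_sigma S =
     sigma (space M) (\<Union>p\<in>S. sigma_sets (space M) {coord p -` A \<inter> space M | A. A \<in> sets borel})"

lemma
  shows space_coord_sigma [simp]: "space (coord_sigma S) = space M"
    and sets_coord_sigma: "sets (coord_sigma S) =
      sigma_sets (space M) (\<Union>p\<in>S. sigma_sets (space M) {coord p -` A \<inter> space M | A. A \<in> sets borel})"
proof -
  have "(\<Union>p\<in>S. sigma_sets (space M) {coord p -` A \<inter> space M | A. A \<in> sets borel}) \<subseteq> Pow (space M)"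
    by (auto dest!: sigma_sets_into_sp[rotated])
  then show "space (coord_sigma S) = space M" "sets (coord_sigma S) =
      sigma_sets (space M) (\<Union>p\<in>S. sigma_sets (space M) {coord p -` A \<inter> space M | A. A \<in> sets borel})"
    unfolding coord_sigma_def by (simp_all add: space_measure_of sets_measure_of)
qed

lemma sets_coord_sigma_subset_events: "sets (coord_sigma S) \<subseteq> events"
proof -
  have "{coord p -` A \<inter> space M | A. A \<in> sets borel} \<subseteq> events" for p
    by (cases p) (auto simp: measurable_def)
  then show ?thesis
    unfolding sets_coord_sigma by (intro sets.sigma_sets_subset UN_least) auto
qed

lemma coord_measurable_coord_sigma:
  assumes "(n, k) \<in> S"
  shows "(\<lambda>\<omega>. X n \<omega> $ k) \<in> borel_measurable (coord_sigma S)"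
proof (rule measurableI)
  fix A :: "real set"
  assume "A \<in> sets borel"
  then have "coord (n, k) -` A \<inter> space M \<in> sets (coord_sigma S)"
    using assms unfolding sets_coord_sigma by (blast intro: sigma_sets.Basic)
  then show "(\<lambda>\<omega>. X n \<omega> $ k) -` A \<inter> space (coord_sigma S) \<in> sets (coord_sigma S)"
    by simp
qed simp

lemma indep_events_coord_sigma:
  assumes disjoint: "disjoint_family_on I J"
    and determined: "\<And>j. j \<in> J \<Longrightarrow> G j \<in> sets (coord_sigma (I j))"
  shows "indep_events G J"
proof -
  let ?E = "\<lambda>p. sigma_sets (space M) {coord p -` A \<inter> space M | A. A \<in> sets borel}"
  have "indep_sets ?E (\<Union>j\<in>J. I j)"
    using indep_coords unfolding indep_vars_def by (auto intro: indep_sets_mono_index)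
  then have "indep_sets (\<lambda>j. sigma_sets (space M) (\<Union>p\<in>I j. ?E p)) J"
  proof (rule indep_sets_collect_sigma[OF _ _ disjoint])
    fix p
    have "sigma_algebra (space M) (?E p)"
      by (rule sigma_algebra_sigma_sets) (auto dest: sets.sets_into_space)
    then interpret sigma_algebra "space M" "?E p" .
    show "Int_stable (?E p)"
      by (intro Int_stableI) (rule Int)
  qed
  then show ?thesis
    unfolding indep_events_def_alt sets_coord_sigma[symmetric]
    by (rule indep_sets_mono_sets) (use determined in auto)
qed

lemma prob_coords_in_box:
  assumes "finite S" "S \<noteq> {}" "\<And>p. p \<in> S \<Longrightarrow> A p \<in> sets borel"
  shows "prob {\<omega>\<in>space M. \<forall>p\<in>S. coord p \<omega> \<in> A p} = (\<Prod>p\<in>S. prob {\<omega>\<in>space M. coord p \<omega> \<in> A p})"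
proof -
  have "prob (\<Inter>p\<in>S. coord p -` A p \<inter> space M) = (\<Prod>p\<in>S. prob (coord p -` A p \<inter> space M))"
    using assms by (intro indep_varsD[OF indep_coords]) auto
  moreover have "(\<Inter>p\<in>S. coord p -` A p \<inter> space M) = {\<omega>\<in>space M. \<forall>p\<in>S. coord p \<omega> \<in> A p}"
    using assms(2) by auto
  ultimately show ?thesis
    by (simp add: vimage_def Int_def conj_commute)
qed

abbreviation close_pair :: "nat \<Rightarrow> nat \<Rightarrow> real \<Rightarrow> 'a set" where
  "close_pair i j r \<equiv> {\<omega>\<in>space M. linf_dist (X i \<omega>) (X j \<omega>) \<le> r}"

lemma close_pair_in_coord_sigma:
  assumes "\<And>k. (i, k) \<in> S" "\<And>k. (j, k) \<in> S"
  shows "close_pair i j r \<in> sets (coord_sigma S)"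
proof -
  have [measurable]: "(\<lambda>\<omega>. X i \<omega> $ k) \<in> borel_measurable (coord_sigma S)"
    "(\<lambda>\<omega>. X j \<omega> $ k) \<in> borel_measurable (coord_sigma S)" for k
    using assms by (auto intro: coord_measurable_coord_sigma)
  have "{\<omega>\<in>space (coord_sigma S). \<forall>k. \<bar>X i \<omega> $ k - X j \<omega> $ k\<bar> \<le> r} \<in> sets (coord_sigma S)"
    by measurable
  then show ?thesis
    by (simp add: linf_dist_le_iff)
qed

lemma close_pair_events [measurable]: "close_pair i j r \<in> events"
  using close_pair_in_coord_sigma[of i UNIV j r] sets_coord_sigma_subset_events by blast

lemma pred_close_pair [measurable]: "Measurable.pred M (\<lambda>\<omega>. linf_dist (X i \<omega>) (X j \<omega>) \<le> r)"
  using close_pair_events unfolding pred_def .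

lemma prob_coord_grid_cell:
  "0 \<le> r \<Longrightarrow> prob {\<omega>\<in>space M. X n \<omega> $ k \<in> grid_cell r t} = exp (- r * l) ^ t * (1 - exp (- r * l))"
  using exponential_prob_grid_cell[OF exponential_coords rate_pos] .

section \<open>Probability of close pairs\<close>

definition grid_box_event :: "nat \<Rightarrow> nat set \<Rightarrow> real \<Rightarrow> ('d \<Rightarrow> nat) \<Rightarrow> 'a set" where
  "grid_box_event i J r m = {\<omega>\<in>space M. \<forall>k. X i \<omega> $ k \<in> grid_cell r (m k) \<and>
     (\<forall>j\<in>J. X j \<omega> $ k \<in> {(real (m k) - 1) * r <.. (real (m k) + 2) * r})}"

lemma grid_box_event_events [measurable]: "finite J \<Longrightarrow> grid_box_event i J r m \<in> events"
  unfolding grid_box_event_def by measurable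

lemma prob_grid_box_event_le:
  assumes "finite J" "i \<notin> J" "0 < r"
  shows "prob (grid_box_event i J r m)
    \<le> (\<Prod>k\<in>UNIV. exp (- r * l) ^ m k * (1 - exp (- r * l))) * (3 * l * r) ^ (CARD('d) * card J)"
proof -
  define A where "A p = (if fst p = i then grid_cell r (m (snd p))
                         else {(real (m (snd p)) - 1) * r <.. (real (m (snd p)) + 2) * r})" for p
  have nbhd_le: "prob {\<omega>\<in>space M. X j \<omega> $ k \<in> {(real t - 1) * r <.. (real t + 2) * r}} \<le> 3 * l * r"
    for j k t
    using exponential_prob_Ioc_le[OF exponential_coords rate_pos, of "(real t - 1) * r" "(real t + 2) * r"]
      assms by (simp add: algebra_simps)
  have "grid_box_event i J r m = {\<omega>\<in>space M. \<forall>p\<in>insert i J \<times> UNIV. coord p \<omega> \<in> A p}"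
    using assms by (auto simp: grid_box_event_def A_def)
  also have "prob \<dots> = (\<Prod>p\<in>insert i J \<times> UNIV. prob {\<omega>\<in>space M. coord p \<omega> \<in> A p})"
    using assms by (intro prob_coords_in_box) (auto simp: A_def grid_cell_def)
  also have "\<dots> = (\<Prod>n\<in>insert i J. \<Prod>k\<in>UNIV. prob {\<omega>\<in>space M. X n \<omega> $ k \<in> A (n, k)})"
    by (subst prod.cartesian_product) (simp add: case_prod_beta)
  also have "\<dots> = (\<Prod>k\<in>UNIV. exp (- r * l) ^ m k * (1 - exp (- r * l))) *
      (\<Prod>j\<in>J. \<Prod>k\<in>UNIV. prob {\<omega>\<in>space M. X j \<omega> $ k \<in> {(real (m k) - 1) * r <.. (real (m k) + 2) * r}})"
    using assms by (subst prod.insert) (auto simp: A_def prob_coord_grid_cell intro!: prod.cong)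
  also have "\<dots> \<le> (\<Prod>k\<in>UNIV. exp (- r * l) ^ m k * (1 - exp (- r * l))) * (\<Prod>j\<in>J. \<Prod>k\<in>(UNIV :: 'd set). 3 * l * r)"
    using assms rate_pos
    by (intro mult_left_mono prod_mono conjI nbhd_le measure_nonneg prod_nonneg ballI) auto
  also have "(\<Prod>j\<in>J. \<Prod>k\<in>(UNIV :: 'd set). 3 * l * r) = (3 * l * r) ^ (CARD('d) * card J)"
    by (simp add: power_mult mult.commute)
  finally show ?thesis .
qed

text \<open>If \<open>X i\<close> lies in the box \<open>m\<close>, every point within distance \<open>r\<close> of it lies in the box
  three cells wide around \<open>m\<close>.\<close>

lemma close_to_all_subset_grid_boxes:
  assumes "0 < r"
  shows "{\<omega>\<in>space M. \<forall>j\<in>J. linf_dist (X i \<omega>) (X j \<omega>) \<le> r}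
    \<subseteq> (\<Union>m\<in>PiE UNIV (\<lambda>_. {..<K}). grid_box_event i J r m) \<union>
      (\<Union>k. {\<omega>\<in>space M. X i \<omega> $ k \<notin> {0 <.. real K * r}})"
proof (intro subsetI)
  fix \<omega> assume \<omega>: "\<omega> \<in> {\<omega>\<in>space M. \<forall>j\<in>J. linf_dist (X i \<omega>) (X j \<omega>) \<le> r}"
  show "\<omega> \<in> (\<Union>m\<in>PiE UNIV (\<lambda>_. {..<K}). grid_box_event i J r m) \<union>
      (\<Union>k. {\<omega>\<in>space M. X i \<omega> $ k \<notin> {0 <.. real K * r}})"
  proof (cases "\<forall>k. X i \<omega> $ k \<in> {0 <.. real K * r}")
    case True
    then have "\<forall>k. \<exists>t<K. X i \<omega> $ k \<in> grid_cell r t"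
      using assms by (intro allI grid_cell_exists) auto
    then obtain m where m: "\<And>k. m k < K \<and> X i \<omega> $ k \<in> grid_cell r (m k)"
      by metis
    have "X j \<omega> $ k \<in> {(real (m k) - 1) * r <.. (real (m k) + 2) * r}" if "j \<in> J" for j k
    proof -
      have "\<bar>X i \<omega> $ k - X j \<omega> $ k\<bar> \<le> r"
        using \<omega> that by (auto simp: linf_dist_le_iff)
      then show ?thesis
        using m[of k] by (auto simp: grid_cell_def algebra_simps abs_le_iff)
    qed
    then have "\<omega> \<in> grid_box_event i J r m"
      using \<omega> m by (auto simp: grid_box_event_def)
    then show ?thesis
      using m by blast
  qed (use \<omega> in blast)
qed

lemma prob_close_to_all_le_truncated:
  assumes J: "finite J" "i \<notin> J" and r: "0 < r"
  shows "prob {\<omega>\<in>space M. \<forall>j\<in>J. linf_dist (X i \<omega>) (X j \<omega>) \<le> r}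
    \<le> (3 * l * r) ^ (CARD('d) * card J) + CARD('d) * exp (- r * l) ^ K"
proof -
  define x where "x = exp (- r * l)"
  define \<Lambda> where "\<Lambda> = PiE UNIV (\<lambda>_::'d. {..<K})"
  define outside where "outside k = {\<omega>\<in>space M. X i \<omega> $ k \<notin> {0 <.. real K * r}}" for k
  have x: "0 \<le> x" "x \<le> 1"
    using r rate_pos by (auto simp: x_def)
  have outside_events: "outside k \<in> events" for k
    unfolding outside_def by measurable
  have "prob (outside k) = x ^ K" for k
  proof -
    have "outside k = space M - {\<omega>\<in>space M. X i \<omega> $ k \<in> {0 <.. real K * r}}"
      by (auto simp: outside_def)
    then show ?thesis
      using exponential_prob_Ioc[OF exponential_coords rate_pos, of 0 "real K * r"] r
      by (simp add: prob_compl x_def exp_of_nat_mult[symmetric] algebra_simps)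
  qed
  have "prob {\<omega>\<in>space M. \<forall>j\<in>J. linf_dist (X i \<omega>) (X j \<omega>) \<le> r}
      \<le> prob ((\<Union>m\<in>\<Lambda>. grid_box_event i J r m) \<union> (\<Union>k. outside k))"
    using close_to_all_subset_grid_boxes[OF r, of J i K] J outside_events
    by (intro finite_measure_mono) (auto simp: \<Lambda>_def outside_def)
  also have "\<dots> \<le> (\<Sum>m\<in>\<Lambda>. prob (grid_box_event i J r m)) + (\<Sum>k\<in>UNIV. prob (outside k))"
    using J outside_events
    by (intro order_trans[OF measure_Un_le] add_mono finite_measure_subadditive_finite)
       (auto simp: \<Lambda>_def intro: finite_PiE)
  also have "\<dots> \<le> (\<Sum>m\<in>\<Lambda>. \<Prod>k\<in>UNIV. x ^ m k * (1 - x)) * (3 * l * r) ^ (CARD('d) * card J)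
      + CARD('d) * x ^ K"
    using prob_grid_box_event_le[OF J r] \<open>\<And>k. prob (outside k) = x ^ K\<close>
    by (simp add: x_def sum_distrib_right sum_mono)
  also have "(\<Sum>m\<in>\<Lambda>. \<Prod>k\<in>UNIV. x ^ m k * (1 - x)) = (\<Prod>k\<in>(UNIV :: 'd set). \<Sum>t<K. x ^ t * (1 - x))"
    unfolding \<Lambda>_def by (subst prod_sum_PiE) auto
  also have "\<dots> = (1 - x ^ K) ^ CARD('d)"
    by (simp only: sum_geometric_weights prod_constant)
  also have "(1 - x ^ K) ^ CARD('d) * (3 * l * r) ^ (CARD('d) * card J) + CARD('d) * x ^ K
      \<le> (3 * l * r) ^ (CARD('d) * card J) + CARD('d) * x ^ K"
    using x rate_pos r by (intro add_mono mult_left_le_one_le power_le_one) (auto simp: power_le_one)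
  finally show ?thesis
    by (simp add: x_def)
qed

lemma prob_close_to_all_le:
  assumes "finite J" "i \<notin> J" "0 < r"
  shows "prob {\<omega>\<in>space M. \<forall>j\<in>J. linf_dist (X i \<omega>) (X j \<omega>) \<le> r} \<le> (3 * l * r) ^ (CARD('d) * card J)"
proof (rule LIMSEQ_le_const)
  have "exp (- r * l) < 1"
    using assms rate_pos by simp
  then show "(\<lambda>K. (3 * l * r) ^ (CARD('d) * card J) + CARD('d) * exp (- r * l) ^ K)
      \<longlonglongrightarrow> (3 * l * r) ^ (CARD('d) * card J)"
    by (auto intro!: tendsto_eq_intros LIMSEQ_power_zero)
qed (use prob_close_to_all_le_truncated[OF assms] in auto)

lemma prob_close_pair_ge_truncated:
  assumes "i \<noteq> j" "0 < r"
  shows "(\<Sum>t<K. (exp (- r * l) ^ t * (1 - exp (- r * l)))\<^sup>2) ^ CARD('d) \<le> prob (close_pair i j r)"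
proof -
  define x where "x = exp (- r * l)"
  define box where
    "box m = {\<omega>\<in>space M. \<forall>k. X i \<omega> $ k \<in> grid_cell r (m k) \<and> X j \<omega> $ k \<in> grid_cell r (m k)}"
    for m :: "'d \<Rightarrow> nat"
  define \<Lambda> where "\<Lambda> = PiE UNIV (\<lambda>_::'d. {..<K})"
  have box_events: "box m \<in> events" for m
    unfolding box_def by measurable
  have "disjoint_family_on box \<Lambda>"
    unfolding disjoint_family_on_def
  proof (intro ballI impI)
    fix m m' :: "'d \<Rightarrow> nat"
    assume "m \<noteq> m'"
    then obtain k where "m k \<noteq> m' k"
      by auto
    then have "grid_cell r (m k) \<inter> grid_cell r (m' k) = {}"
      using assms by (intro grid_cells_disjoint)
    then show "box m \<inter> box m' = {}"
      by (auto simp: box_def)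
  qed
  have "box m \<subseteq> close_pair i j r" for m
  proof
    fix \<omega> assume \<omega>: "\<omega> \<in> box m"
    have "\<bar>X i \<omega> $ k - X j \<omega> $ k\<bar> \<le> r" for k
    proof -
      have "X i \<omega> $ k \<in> grid_cell r (m k)" "X j \<omega> $ k \<in> grid_cell r (m k)"
        using \<omega> by (auto simp: box_def)
      then show ?thesis
        by (auto simp: grid_cell_def abs_le_iff algebra_simps)
    qed
    then show "\<omega> \<in> close_pair i j r"
      using \<omega> by (auto simp: box_def linf_dist_le_iff)
  qed
  have prob_box: "prob (box m) = (\<Prod>k\<in>UNIV. (x ^ m k * (1 - x))\<^sup>2)" for m
  proof -
    have "box m = {\<omega>\<in>space M. \<forall>p\<in>{i, j} \<times> UNIV. coord p \<omega> \<in> grid_cell r (m (snd p))}"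
      by (auto simp: box_def)
    also have "prob \<dots> = (\<Prod>p\<in>{i, j} \<times> UNIV. prob {\<omega>\<in>space M. coord p \<omega> \<in> grid_cell r (m (snd p))})"
      by (intro prob_coords_in_box) auto
    also have "\<dots> = (\<Prod>n\<in>{i, j}. \<Prod>k\<in>UNIV. x ^ m k * (1 - x))"
      using assms by (subst prod.cartesian_product) (simp add: case_prod_beta prob_coord_grid_cell x_def)
    finally show ?thesis
      using assms by (simp add: power2_eq_square prod.distrib)
  qed
  have "(\<Sum>t<K. (x ^ t * (1 - x))\<^sup>2) ^ CARD('d) = (\<Sum>m\<in>\<Lambda>. \<Prod>k\<in>UNIV. (x ^ m k * (1 - x))\<^sup>2)"
    unfolding \<Lambda>_def by (subst prod_sum_PiE[symmetric]) auto
  also have "\<dots> = prob (\<Union>m\<in>\<Lambda>. box m)"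
    using box_events \<open>disjoint_family_on box \<Lambda>\<close>
    by (subst finite_measure_finite_Union) (auto simp: prob_box \<Lambda>_def intro: finite_PiE)
  also have "\<dots> \<le> prob (close_pair i j r)"
    using \<open>\<And>m. box m \<subseteq> close_pair i j r\<close> by (intro finite_measure_mono) auto
  finally show ?thesis
    by (simp add: x_def)
qed

lemma prob_close_pair_ge:
  assumes "i \<noteq> j" "0 < r" "l * r \<le> 1"
  shows "(l * r / 8) ^ CARD('d) \<le> prob (close_pair i j r)"
proof -
  define x where "x = exp (- r * l)"
  have x: "0 \<le> x" "x < 1"
    using assms rate_pos by (auto simp: x_def)
  then have "(\<lambda>K. (x\<^sup>2) ^ K) \<longlonglongrightarrow> 0"
    by (intro LIMSEQ_power_zero) (simp add: abs_square_less_1)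
  then have "eventually (\<lambda>K. (x\<^sup>2) ^ K < 1 / 2) sequentially"
    by (rule order_tendstoD(2)) simp
  then obtain K where K: "(x\<^sup>2) ^ K < 1 / 2"
    by (auto simp: eventually_sequentially)
  have "l * r / 8 \<le> (1 - x) / 4"
    using one_minus_exp_ge_half[of "r * l"] assms rate_pos by (simp add: x_def mult.commute)
  also have "\<dots> = 1 / 2 * (1 - x) / 2"
    by simp
  also have "\<dots> \<le> 1 / 2 * (1 - x) / (1 + x)"
    using x by (intro frac_le) auto
  also have "\<dots> \<le> (1 - (x\<^sup>2) ^ K) * (1 - x) / (1 + x)"
    using x K by (intro divide_right_mono mult_right_mono) auto
  also have "\<dots> = (\<Sum>t<K. (x ^ t * (1 - x))\<^sup>2)"
    using x by (simp add: sum_sq_geometric_weights)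
  finally have "(l * r / 8) ^ CARD('d) \<le> (\<Sum>t<K. (x ^ t * (1 - x))\<^sup>2) ^ CARD('d)"
    using assms rate_pos by (intro power_mono) auto
  also have "\<dots> \<le> prob (close_pair i j r)"
    unfolding x_def using assms(1,2) by (rule prob_close_pair_ge_truncated)
  finally show ?thesis .
qed

lemma prob_close_pair_le:
  assumes "i \<noteq> j" "0 < r"
  shows "prob (close_pair i j r) \<le> (3 * l * r) ^ CARD('d)"
  using prob_close_to_all_le[of "{j}" i r] assms by simp

lemma prob_Int_disjoint_close_pairs:
  assumes "{i, j} \<inter> {i', j'} = {}"
  shows "prob (close_pair i j r \<inter> close_pair i' j' r) = prob (close_pair i j r) * prob (close_pair i' j' r)"
proof -
  define I where "I b = (if b then {i, j} else {i', j'}) \<times> (UNIV :: 'd set)" for b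
  define G where "G b = (if b then close_pair i j r else close_pair i' j' r)" for b
  have "indep_events G UNIV"
  proof (rule indep_events_coord_sigma)
    show "disjoint_family_on I UNIV"
      using assms by (auto simp: disjoint_family_on_def I_def)
    show "G b \<in> sets (coord_sigma (I b))" for b
      by (cases b) (auto simp: G_def I_def intro!: close_pair_in_coord_sigma)
  qed
  then show ?thesis
    unfolding indep_events_def by (auto simp: UNIV_bool G_def Int_commute)
qed

lemma prob_two_close_pairs_le:
  assumes "i \<noteq> j" "i' \<noteq> j'" "{i, j} \<noteq> {i', j'}" "0 < r"
  shows "prob (close_pair i j r \<inter> close_pair i' j' r) \<le> (3 * l * r) ^ (2 * CARD('d))"
proof (cases "{i, j} \<inter> {i', j'} = {}")
  case True
  then have "prob (close_pair i j r \<inter> close_pair i' j' r) = prob (close_pair i j r) * prob (close_pair i' j' r)"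
    by (rule prob_Int_disjoint_close_pairs)
  also have "\<dots> \<le> (3 * l * r) ^ CARD('d) * (3 * l * r) ^ CARD('d)"
    using prob_close_pair_le assms rate_pos by (intro mult_mono) auto
  finally show ?thesis
    by (simp add: mult_2 power_add)
next
  case False
  have commute: "close_pair a b r = close_pair b a r" for a b
    by (auto simp: linf_dist_commute)
  from False consider "i = i'" | "i = j'" | "j = i'" | "j = j'"
    by auto
  then obtain c u v where "c \<notin> {u, v}" "u \<noteq> v"
    and "close_pair i j r \<inter> close_pair i' j' r = close_pair c u r \<inter> close_pair c v r"
  proof cases
    case 1
    then show thesis
      using that[of i j j'] assms by auto
  next
    case 2
    then show thesis
      using that[of i j i'] assms commute[of i i'] by auto
  next
    case 3
    then show thesis
      using that[of j i j'] assms commute[of i j] by auto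
  next
    case 4
    then show thesis
      using that[of j i i'] assms commute[of i j] commute[of i' j] by auto
  qed
  moreover have "close_pair c u r \<inter> close_pair c v r = {\<omega>\<in>space M. \<forall>w\<in>{u, v}. linf_dist (X c \<omega>) (X w \<omega>) \<le> r}"
    by auto
  ultimately show ?thesis
    using prob_close_to_all_le[of "{u, v}" c r] assms by (simp add: mult_2 mult_2_right)
qed

lemma sum_prob_close_across_ge:
  assumes "T1 \<inter> T2 = {}" "0 < r" "l * r \<le> 1"
  shows "real (card (T1 \<times> T2)) * (l * r / 8) ^ CARD('d)
    \<le> (\<Sum>a\<in>T1 \<times> T2. prob (close_pair (fst a) (snd a) r))"
proof -
  have "(l * r / 8) ^ CARD('d) \<le> prob (close_pair (fst a) (snd a) r)" if "a \<in> T1 \<times> T2" for a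
    using that assms by (intro prob_close_pair_ge) auto
  then show ?thesis
    using sum_mono[of "T1 \<times> T2" "\<lambda>_. (l * r / 8) ^ CARD('d)"] by simp
qed

lemma sum_prob_two_close_across_le:
  assumes "T1 \<inter> T2 = {}" "0 < r"
  shows "(\<Sum>a\<in>T1 \<times> T2. \<Sum>b\<in>T1 \<times> T2 - {a}. prob (close_pair (fst a) (snd a) r \<inter> close_pair (fst b) (snd b) r))
    \<le> real (card (T1 \<times> T2)) ^ 2 * (3 * l * r) ^ (2 * CARD('d))"
proof -
  let ?P = "T1 \<times> T2" and ?c = "(3 * l * r) ^ (2 * CARD('d))"
  have "prob (close_pair (fst a) (snd a) r \<inter> close_pair (fst b) (snd b) r) \<le> ?c"
    if "a \<in> ?P" "b \<in> ?P - {a}" for a b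
  proof (rule prob_two_close_pairs_le)
    show "{fst a, snd a} \<noteq> {fst b, snd b}"
      using that assms by (auto simp: doubleton_eq_iff prod_eq_iff)
  qed (use that assms in auto)
  then have "(\<Sum>a\<in>?P. \<Sum>b\<in>?P - {a}. prob (close_pair (fst a) (snd a) r \<inter> close_pair (fst b) (snd b) r))
      \<le> (\<Sum>a\<in>?P. \<Sum>b\<in>?P - {a}. ?c)"
    by (intro sum_mono) auto
  also have "\<dots> \<le> (\<Sum>a\<in>?P. real (card ?P) * ?c)"
    using assms rate_pos card_Diff1_le[of ?P]
    by (intro sum_mono) (auto intro!: mult_right_mono)
  finally show ?thesis
    by (simp add: power2_eq_square mult_ac)
qed

text \<open>The smallness assumption makes the second-order Bonferroni term at most half of the
  first-order term.\<close>

lemma prob_close_across_ge_small: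
  assumes T: "finite T1" "finite T2" "T1 \<inter> T2 = {}" and r: "0 < r"
    and small: "real (card (T1 \<times> T2)) * (l * r) ^ CARD('d) \<le> (1 / 144) ^ CARD('d)"
  shows "real (card (T1 \<times> T2)) * (l * r) ^ CARD('d) / (2 * 8 ^ CARD('d))
    \<le> prob {\<omega>\<in>space M. \<exists>i\<in>T1. \<exists>j\<in>T2. linf_dist (X i \<omega>) (X j \<omega>) \<le> r}"
proof (cases "T1 \<times> T2 = {}")
  case False
  define d where "d = CARD('d)"
  define N where "N = real (card (T1 \<times> T2))"
  define t where "t = (l * r) ^ d"
  have "0 < card (T1 \<times> T2)"
    using T False by (auto simp: card_gt_0_iff)
  then have N: "1 \<le> N"
    unfolding N_def by linarith
  have t: "0 \<le> t" "N * t \<le> (1 / 144) ^ d"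
    using small rate_pos r by (auto simp: t_def N_def d_def)
  have "l * r \<le> 1"
  proof (rule ccontr)
    assume "\<not> l * r \<le> 1"
    then have "(1 / 144) ^ d < t"
      unfolding t_def d_def by (intro power_strict_mono) auto
    then show False
      using N t mult_right_mono[OF N t(1)] by simp
  qed
  have "N * t / (2 * 8 ^ d) \<le> N * (l * r / 8) ^ d - N\<^sup>2 * (3 * l * r) ^ (2 * d)"
  proof -
    have "(3 * l * r) ^ (2 * d) = (9 * (l * r)\<^sup>2) ^ d"
      by (simp add: power_mult power2_eq_square algebra_simps flip: power_mult_distrib)
    then have second_order: "(3 * l * r) ^ (2 * d) = 9 ^ d * t\<^sup>2"
      by (simp add: t_def power_mult_distrib power_mult[symmetric] mult.commute)
    have "9 ^ d * (N * t) \<le> (1 / 8) ^ d * (1 / 2) ^ d"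
      using mult_left_mono[OF t(2), of "9 ^ d"] by (simp flip: power_mult_distrib)
    also have "\<dots> \<le> (1 / 8) ^ d * (1 / 2)"
      unfolding d_def by (intro mult_left_mono power_decreasing[of 1 _ "1 / 2", simplified]) auto
    finally have "N * t * (9 ^ d * (N * t)) \<le> N * t * ((1 / 8) ^ d * (1 / 2))"
      using N t by (intro mult_left_mono) auto
    with second_order show ?thesis
      by (simp add: t_def power_divide power2_eq_square power_one_over field_simps)
  qed
  also have "\<dots> \<le> prob (\<Union>a\<in>T1 \<times> T2. close_pair (fst a) (snd a) r)"
    using prob_UN_ge_bonferroni[of "T1 \<times> T2" "\<lambda>a. close_pair (fst a) (snd a) r"]
      sum_prob_close_across_ge[OF T(3) r \<open>l * r \<le> 1\<close>] sum_prob_two_close_across_le[OF T(3) r] T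
    by (simp add: N_def d_def)
  also have "(\<Union>a\<in>T1 \<times> T2. close_pair (fst a) (snd a) r)
      = {\<omega>\<in>space M. \<exists>i\<in>T1. \<exists>j\<in>T2. linf_dist (X i \<omega>) (X j \<omega>) \<le> r}"
    by (auto; blast)
  finally show ?thesis
    by (simp add: N_def t_def d_def)
qed auto

text \<open>Beyond the small regime, the radius is shrunk to the \<open>\<rho> < r\<close> at which the smallness
  assumption holds with equality.\<close>

lemma prob_close_across_ge:
  assumes T: "finite T1" "finite T2" "T1 \<inter> T2 = {}" and r: "0 < r"
  shows "min (real (card (T1 \<times> T2)) * (l * r) ^ CARD('d)) ((1 / 144) ^ CARD('d)) / (2 * 8 ^ CARD('d))
    \<le> prob {\<omega>\<in>space M. \<exists>i\<in>T1. \<exists>j\<in>T2. linf_dist (X i \<omega>) (X j \<omega>) \<le> r}"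
proof (cases "real (card (T1 \<times> T2)) * (l * r) ^ CARD('d) \<le> (1 / 144) ^ CARD('d)")
  case True
  then show ?thesis
    using prob_close_across_ge_small[OF T r] by simp
next
  case False
  define N where "N = real (card (T1 \<times> T2))"
  define \<rho> where "\<rho> = 1 / (144 * l * root CARD('d) N)"
  have N: "0 < N"
    using False rate_pos r by (auto simp: N_def intro: Nat.gr0I)
  have \<rho>: "0 < \<rho>" "N * (l * \<rho>) ^ CARD('d) = (1 / 144) ^ CARD('d)"
    using N rate_pos by (simp_all add: \<rho>_def power_divide power_mult_distrib)
  then have "N * (l * \<rho>) ^ CARD('d) < N * (l * r) ^ CARD('d)"
    using False unfolding N_def by linarith
  then have "(l * \<rho>) ^ CARD('d) < (l * r) ^ CARD('d)"
    using N by (simp add: mult_less_cancel_left_pos)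
  then have "\<rho> < r"
    using rate_pos r \<rho> power_less_imp_less_base[of "l * \<rho>" "CARD('d)" "l * r"] by simp
  have "min (N * (l * r) ^ CARD('d)) ((1 / 144) ^ CARD('d)) = N * (l * \<rho>) ^ CARD('d)"
    using False \<rho> by (simp add: N_def)
  also have "\<dots> / (2 * 8 ^ CARD('d))
      \<le> prob {\<omega>\<in>space M. \<exists>i\<in>T1. \<exists>j\<in>T2. linf_dist (X i \<omega>) (X j \<omega>) \<le> \<rho>}"
    using prob_close_across_ge_small[OF T \<rho>(1)] \<rho> by (simp add: N_def)
  also have "\<dots> \<le> prob {\<omega>\<in>space M. \<exists>i\<in>T1. \<exists>j\<in>T2. linf_dist (X i \<omega>) (X j \<omega>) \<le> r}"
  proof (rule finite_measure_mono)
    show "{\<omega>\<in>space M. \<exists>i\<in>T1. \<exists>j\<in>T2. linf_dist (X i \<omega>) (X j \<omega>) \<le> r} \<in> events"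
      using T by measurable
  qed (use \<open>\<rho> < r\<close> in force)
  finally show ?thesis
    by (simp add: N_def)
qed

section \<open>The two regimes\<close>

lemma max_degree_ge_1_events:
  "{\<omega>\<in>space M. 1 \<le> rgg_max_degree (\<lambda>i. X i \<omega>) n r} \<in> events"
  unfolding rgg_max_degree_ge_1_iff by measurable

lemma frequently_max_degree_ge_1_events:
  "{\<omega>\<in>space M. \<exists>\<^sub>F n in sequentially. 1 \<le> rgg_max_degree (\<lambda>i. X i \<omega>) n (y n)} \<in> events"
  unfolding frequently_sequentially using max_degree_ge_1_events by measurable

lemma prob_max_degree_ge_1_le:
  assumes "0 < r"
  shows "prob {\<omega>\<in>space M. 1 \<le> rgg_max_degree (\<lambda>i. X i \<omega>) n r} \<le> real n ^ 2 * (3 * l * r) ^ CARD('d)"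
proof -
  define P where "P = {p \<in> {1..n} \<times> {1..n}. fst p \<noteq> snd p}"
  have "finite P"
    by (auto simp: P_def intro: finite_subset[of _ "{1..n} \<times> {1..n}"])
  have "{\<omega>\<in>space M. 1 \<le> rgg_max_degree (\<lambda>i. X i \<omega>) n r} = (\<Union>p\<in>P. close_pair (fst p) (snd p) r)"
  proof (intro equalityI subsetI)
    fix \<omega> assume "\<omega> \<in> {\<omega>\<in>space M. 1 \<le> rgg_max_degree (\<lambda>i. X i \<omega>) n r}"
    then obtain i j where "\<omega> \<in> space M" "i \<in> {1..n}" "j \<in> {1..n}" "j \<noteq> i"
      "linf_dist (X i \<omega>) (X j \<omega>) \<le> r"
      unfolding rgg_max_degree_ge_1_iff by blast
    then show "\<omega> \<in> (\<Union>p\<in>P. close_pair (fst p) (snd p) r)"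
      by (intro UN_I[of "(i, j)"]) (auto simp: P_def)
  next
    fix \<omega> assume "\<omega> \<in> (\<Union>p\<in>P. close_pair (fst p) (snd p) r)"
    then obtain i j where ij: "\<omega> \<in> space M" "(i, j) \<in> P" "linf_dist (X i \<omega>) (X j \<omega>) \<le> r"
      by auto
    have "1 \<le> rgg_max_degree (\<lambda>i. X i \<omega>) n r"
      unfolding rgg_max_degree_ge_1_iff using ij by (intro bexI[of _ i] bexI[of _ j]) (auto simp: P_def)
    then show "\<omega> \<in> {\<omega>\<in>space M. 1 \<le> rgg_max_degree (\<lambda>i. X i \<omega>) n r}"
      using ij by simp
  qed
  also have "prob \<dots> \<le> (\<Sum>p\<in>P. prob (close_pair (fst p) (snd p) r))"
    using \<open>finite P\<close> by (intro finite_measure_subadditive_finite) auto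
  also have "\<dots> \<le> (\<Sum>p\<in>P. (3 * l * r) ^ CARD('d))"
    using prob_close_pair_le assms by (intro sum_mono) (auto simp: P_def)
  also have "\<dots> \<le> real n ^ 2 * (3 * l * r) ^ CARD('d)"
  proof -
    have "card P \<le> card ({1..n} \<times> {1..n})"
      by (intro card_mono) (auto simp: P_def)
    then have "real (card P) \<le> real n ^ 2"
      by (simp add: power2_eq_square flip: of_nat_mult)
    then show ?thesis
      using assms rate_pos by (simp add: mult_right_mono)
  qed
  finally show ?thesis .
qed

lemma AE_eventually_max_degree_0:
  assumes ypos: "\<And>n. 0 < y n" and dec: "decseq y"
    and summable: "summable (\<lambda>n. real n * y n ^ CARD('d))"
  shows "AE \<omega> in M. eventually (\<lambda>n. rgg_max_degree (\<lambda>i. X i \<omega>) n (y n) = 0) sequentially"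
proof -
  define H where "H k = {\<omega>\<in>space M. 1 \<le> rgg_max_degree (\<lambda>i. X i \<omega>) (2 ^ Suc k) (y (2 ^ k))}" for k
  have "summable (\<lambda>k. 4 ^ k * y (2 ^ k) ^ CARD('d))"
    using ypos dec summable
    by (intro summable_dyadic_of_summable_mult) (auto simp: decseq_def intro: power_mono less_imp_le)
  then have "summable (\<lambda>k. 4 * (3 * l) ^ CARD('d) * (4 ^ k * y (2 ^ k) ^ CARD('d)))"
    by (rule summable_mult)
  moreover have "norm (prob (H k)) \<le> 4 * (3 * l) ^ CARD('d) * (4 ^ k * y (2 ^ k) ^ CARD('d))" for k
  proof -
    have "(2::real) ^ (k * 2) = 4 ^ k"
      by (simp add: mult.commute[of k] power_mult)
    then show ?thesis
      using prob_max_degree_ge_1_le[OF ypos, of "2 ^ Suc k" "2 ^ k"]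
      by (simp add: H_def power_mult_distrib power_mult[symmetric] mult_ac)
  qed
  ultimately have "summable (\<lambda>k. prob (H k))"
    by (rule summable_comparison_test')
  then have "AE \<omega> in M. eventually (\<lambda>k. \<omega> \<in> space M - H k) sequentially"
    unfolding H_def using max_degree_ge_1_events
    by (intro borel_cantelli_AE1) (auto simp: emeasure_eq_measure)
  then show ?thesis
  proof (rule AE_mp, intro AE_I2 impI)
    fix \<omega> assume "\<omega> \<in> space M" "eventually (\<lambda>k. \<omega> \<in> space M - H k) sequentially"
    have "rgg_max_degree (\<lambda>i. X i \<omega>) n (y n) = 0"
      if "2 ^ k \<le> n" "n < 2 ^ Suc k" "\<omega> \<in> space M - H k" for k n
    proof (rule ccontr)
      assume "rgg_max_degree (\<lambda>i. X i \<omega>) n (y n) \<noteq> 0"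
      then have degree: "1 \<le> rgg_max_degree (\<lambda>i. X i \<omega>) n (y n)"
        by simp
      have "y n \<le> y (2 ^ k)"
        using that dec by (simp add: decseq_def)
      then have "1 \<le> rgg_max_degree (\<lambda>i. X i \<omega>) (2 ^ Suc k) (y (2 ^ k))"
        using rgg_max_degree_ge_1_mono[OF degree, of "2 ^ Suc k"] that(2) by simp
      then show False
        using that(3) by (simp add: H_def)
    qed
    with \<open>eventually (\<lambda>k. \<omega> \<in> space M - H k) sequentially\<close>
    show "eventually (\<lambda>n. rgg_max_degree (\<lambda>i. X i \<omega>) n (y n) = 0) sequentially"
      by (rule eventually_sequentially_dyadic)
  qed
qed

lemma indep_events_close_across:
  assumes "\<And>k. finite (T1 k)" "\<And>k. finite (T2 k)" "\<And>k. T1 k \<union> T2 k \<subseteq> U k" "disjoint_family U"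
  shows "indep_events (\<lambda>k. {\<omega>\<in>space M. \<exists>i\<in>T1 k. \<exists>j\<in>T2 k. linf_dist (X i \<omega>) (X j \<omega>) \<le> r k}) UNIV"
proof (rule indep_events_coord_sigma[where I="\<lambda>k. U k \<times> UNIV"])
  show "disjoint_family_on (\<lambda>k. U k \<times> UNIV) UNIV"
    using assms(4) by (auto simp: disjoint_family_on_def)
  fix k
  have "{\<omega>\<in>space M. \<exists>i\<in>T1 k. \<exists>j\<in>T2 k. linf_dist (X i \<omega>) (X j \<omega>) \<le> r k}
      = (\<Union>i\<in>T1 k. \<Union>j\<in>T2 k. close_pair i j (r k))"
    by blast
  also have "\<dots> \<in> sets (coord_sigma (U k \<times> UNIV))"
    using assms by (intro sets.finite_UN close_pair_in_coord_sigma) blast+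
  finally show "{\<omega>\<in>space M. \<exists>i\<in>T1 k. \<exists>j\<in>T2 k. linf_dist (X i \<omega>) (X j \<omega>) \<le> r k}
      \<in> sets (coord_sigma (U k \<times> UNIV))" .
qed

lemma AE_frequently_max_degree_ge_1:
  assumes ypos: "\<And>n. 0 < y n" and diverges: "\<not> summable (\<lambda>n. real n * y n ^ CARD('d))"
  shows "AE \<omega> in M. \<exists>\<^sub>F n in sequentially. 1 \<le> rgg_max_degree (\<lambda>i. X i \<omega>) n (y n)"
proof -
  obtain m where m: "\<And>k. m k \<in> {2^(k+2)..<2^(k+3)}"
    and m_max: "\<And>k n. n \<in> {2^(k+2)..<2^(k+3)} \<Longrightarrow> y n \<le> y (m k)"
    using dyadic_block_argmax[of y] by blast
  define T1 where "T1 k = {2^(k+1) <.. 2^(k+1) + (2::nat)^k}" for k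
  define T2 where "T2 k = {2^(k+1) + 2^k <.. (2::nat)^(k+2)}" for k
  define E where "E k = {\<omega>\<in>space M. \<exists>i\<in>T1 k. \<exists>j\<in>T2 k. linf_dist (X i \<omega>) (X j \<omega>) \<le> y (m k)}" for k
  have T: "finite (T1 k)" "finite (T2 k)" "T1 k \<inter> T2 k = {}" "card (T1 k \<times> T2 k) = 4 ^ k" for k
    by (auto simp: T1_def T2_def card_cartesian_product power_add power_mult_distrib[symmetric])
  have "indep_events E UNIV"
    unfolding E_def using disjoint_family_dyadic
    by (rule indep_events_close_across[rotated 3]) (auto simp: T1_def T2_def power_add)
  moreover have "\<not> summable (\<lambda>k. prob (E k))"
  proof
    assume "summable (\<lambda>k. prob (E k))"
    then have "summable (\<lambda>k. (2 * 8 ^ CARD('d)) * prob (E k))"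
      by (rule summable_mult)
    moreover have "norm (min (4 ^ k * (l * y (m k)) ^ CARD('d)) ((1 / 144) ^ CARD('d)))
        \<le> (2 * 8 ^ CARD('d)) * prob (E k)" for k
      using prob_close_across_ge[OF T(1-3) ypos, of k "m k"] ypos[of "m k"] rate_pos
      by (simp add: E_def T(4) field_simps)
    ultimately have "summable (\<lambda>k. min (4 ^ k * (l * y (m k)) ^ CARD('d)) ((1 / 144) ^ CARD('d)))"
      by (rule summable_comparison_test')
    then show False
      using not_summable_dyadic_min[OF rate_pos _ _ m_max diverges] ypos by (auto simp: less_imp_le)
  qed
  ultimately have frequently_E: "AE \<omega> in M. \<exists>\<^sub>F k in sequentially. \<omega> \<in> E k"
    by (rule borel_cantelli_AE2)
  have degree: "1 \<le> rgg_max_degree (\<lambda>i. X i \<omega>) (m k) (y (m k))" if E: "\<omega> \<in> E k" for \<omega> k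
  proof -
    obtain i j where "i \<in> T1 k" "j \<in> T2 k" "linf_dist (X i \<omega>) (X j \<omega>) \<le> y (m k)"
      using E by (auto simp: E_def)
    then show ?thesis
      using m[of k] unfolding rgg_max_degree_ge_1_iff
      by (intro bexI[of _ i] bexI[of _ j] conjI) (auto simp: T1_def T2_def power_add)
  qed
  have m_ge: "k \<le> m k" for k
    using m[of k] less_exp[of "k + 2"] by (simp only: atLeastLessThan_iff) linarith
  from frequently_E show ?thesis
  proof (rule AE_mp, intro AE_I2 impI)
    fix \<omega> assume "\<exists>\<^sub>F k in sequentially. \<omega> \<in> E k"
    then have "\<exists>\<^sub>F k in sequentially. 1 \<le> rgg_max_degree (\<lambda>i. X i \<omega>) (m k) (y (m k))"
      by (rule frequently_elim1) (rule degree)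
    then show "\<exists>\<^sub>F n in sequentially. 1 \<le> rgg_max_degree (\<lambda>i. X i \<omega>) n (y n)"
      using m_ge by (rule frequently_sequentially_reindex)
  qed
qed

end

theorem theorem3:
  fixes M :: "'a measure" and X :: "nat \<Rightarrow> 'a \<Rightarrow> real ^ 'd" and l :: real
    and y :: "nat \<Rightarrow> real"
  assumes "prob_space M"
    and "l > 0"
    and "prob_space.indep_vars M (\<lambda>_. borel) (\<lambda>(n, k) \<omega>. X n \<omega> $ k) UNIV"
    and "\<And>n k. distributed M lborel (\<lambda>\<omega>. X n \<omega> $ k) (exponential_density l)"
    and "\<And>n. y n > 0"
  shows "(summable (\<lambda>n. real n * y n ^ CARD('d)) \<and> decseq y \<longrightarrow>
           {\<omega> \<in> space M. \<exists>\<^sub>F n in sequentially. rgg_max_degree (\<lambda>i. X i \<omega>) n (y n) \<ge> 1} \<in> sets M \<and>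
           measure M {\<omega> \<in> space M. \<exists>\<^sub>F n in sequentially. rgg_max_degree (\<lambda>i. X i \<omega>) n (y n) \<ge> 1} = 0)
       \<and> (\<not> summable (\<lambda>n. real n * y n ^ CARD('d)) \<longrightarrow>
           {\<omega> \<in> space M. \<exists>\<^sub>F n in sequentially. rgg_max_degree (\<lambda>i. X i \<omega>) n (y n) \<ge> 1} \<in> sets M \<and>
           measure M {\<omega> \<in> space M. \<exists>\<^sub>F n in sequentially. rgg_max_degree (\<lambda>i. X i \<omega>) n (y n) \<ge> 1} = 1)"
proof -
  interpret exponential_points M X l
    using assms(1-4) by (simp add: exponential_points_def exponential_points_axioms_def)
  let ?S = "{\<omega> \<in> space M. \<exists>\<^sub>F n in sequentially. rgg_max_degree (\<lambda>i. X i \<omega>) n (y n) \<ge> 1}"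
  have S: "?S \<in> sets M"
    by (rule frequently_max_degree_ge_1_events)
  show ?thesis
  proof (intro conjI impI)
    assume "summable (\<lambda>n. real n * y n ^ CARD('d)) \<and> decseq y"
    then have "AE \<omega> in M. eventually (\<lambda>n. rgg_max_degree (\<lambda>i. X i \<omega>) n (y n) = 0) sequentially"
      using AE_eventually_max_degree_0[of y] assms(5) by blast
    then have "AE \<omega> in M. \<omega> \<notin> ?S"
      by eventually_elim (auto simp: not_frequently elim: eventually_mono)
    then show "measure M ?S = 0"
      using prob_eq_0[OF S] by simp
  next
    assume "\<not> summable (\<lambda>n. real n * y n ^ CARD('d))"
    then have "AE \<omega> in M. \<omega> \<in> ?S"
      using AE_frequently_max_degree_ge_1[of y] assms(5) by simp
    then show "measure M ?S = 1"
      using prob_eq_1[OF S] by simp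
  qed (use S in auto)
qed

end
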